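(* Let a logic be given by a sentential language with a constant expressive semantics over a finite set $V$ of truth values, whose consequence relation is induced by an intersective mixed consequence truth-relation $\models$, and suppose the logic has a G-conditional. Then for every classical connective $C$ (a truth function $\{0,1\}^n\to\{0,1\}$), there is a truth function $\underline{C^+}:V^n\to V$ such that a connective $C^+$ interpreted by it is regular for the logic with a regularity rule $(\mathcal{B}^p,\mathcal{B}^c)$ that is also satisfied by $C$ in classical logic.
   Context: Truth values: finite $V$ containing distinct $1,0$. A set of designated values is $\mathcal{D}\subseteq V$ with $1\in\mathcal{D}$, $0\notin\mathcal{D}$; the mixed truth-relation $\models_{\mathcal{D}_p,\mathcal{D}_c}$ holds between $\gamma,\delta\subseteq V$ iff ($\gamma\subseteq\mathcal{D}_p\Rightarrow\delta\cap\mathcal{D}_c\neq\emptyset$); an intersective mixed truth-relation is a finite intersection of such. A sentential language has denumerably many atoms and connectives; a semantics is a set of valuations mapping atoms to $V$, interpreting each $n$-ary connective by a fixed truth function $V^n\to V$ (same for all valuations), extended compositionally, and such that every assignment of values to finitely many distinct atoms is realized by some valuation. The induced consequence relation on sets of formulas: $\Gamma\vdash\Delta$ iff $v(\Gamma)\models v(\Delta)$ for every valuation $v$. Constant expressive: for every $\alpha\in V$ some formula has value $\alpha$ under every valuation. Write $\Gamma,A$ for $\Gamma\cup\{A\}$. An $n$-ary connective $C$ is regular with regularity rule $(\mathcal{B}^p,\mathcal{B}^c)$, $\mathcal{B}^p,\mathcal{B}^c\subseteq\mathcal{P}(\{1..n\})^2$, if for all $\Gamma,\Delta,F_1,\dots,F_n$: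 $\Gamma,C(F_1,\dots,F_n)\vdash\Delta$ iff for all $(B_p,B_c)\in\mathcal{B}^p$, $\Gamma\cup\{F_i:i\in B_p\}\vdash\{F_i:i\in B_c\}\cup\Delta$; and $\Gamma\vdash C(F_1,\dots,F_n),\Delta$ iff the same holds for all $(B_p,B_c)\in\mathcal{B}^c$. A G-conditional $\to$ is a binary connective with: $\Gamma\vdash A\to B,\Delta$ iff $\Gamma,A\vdash B,\Delta$; and $\Gamma,A\to B\vdash\Delta$ iff ($\Gamma\vdash A,\Delta$ and $\Gamma,B\vdash\Delta$). Classical logic: $V=\{0,1\}$ with the truth-relation $\models_{\{1\},\{1\}}$. *)

theory Defs
  imports Main "HOL-Library.Countable_Set"
begin

datatype 'c form = Atom nat | Op 'c "'c form list"

fun wf :: "('c \<Rightarrow> nat) \<Rightarrow> 'c form \<Rightarrow> bool" where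
  "wf ar (Atom k) = True"
| "wf ar (Op c fs) = (length fs = ar c \<and> (\<forall>f\<in>set fs. wf ar f))"

fun eval :: "('c \<Rightarrow> 'v list \<Rightarrow> 'v) \<Rightarrow> (nat \<Rightarrow> 'v) \<Rightarrow> 'c form \<Rightarrow> 'v" where
  "eval I w (Atom k) = w k"
| "eval I w (Op c fs) = I c (map (eval I w) fs)"

definition designated :: "'v \<Rightarrow> 'v \<Rightarrow> 'v set \<Rightarrow> bool" where
  "designated one zero D \<longleftrightarrow> one \<in> D \<and> zero \<notin> D"

definition mixed :: "'v set \<Rightarrow> 'v set \<Rightarrow> 'v set \<Rightarrow> 'v set \<Rightarrow> bool" where
  "mixed Dp Dc \<gamma> \<delta> \<longleftrightarrow> (\<gamma> \<subseteq> Dp \<longrightarrow> \<delta> \<inter> Dc \<noteq> {})"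

definition intersective :: "'v \<Rightarrow> 'v \<Rightarrow> ('v set \<Rightarrow> 'v set \<Rightarrow> bool) \<Rightarrow> bool" where
  "intersective one zero R \<longleftrightarrow>
     (\<exists>S. finite S \<and> S \<noteq> {} \<and>
          (\<forall>(Dp, Dc)\<in>S. designated one zero Dp \<and> designated one zero Dc) \<and>
          R = (\<lambda>\<gamma> \<delta>. \<forall>(Dp, Dc)\<in>S. mixed Dp Dc \<gamma> \<delta>))"

definition semantics :: "(nat \<Rightarrow> 'v) set \<Rightarrow> bool" where
  "semantics W \<longleftrightarrow> (\<forall>A f. finite A \<longrightarrow> (\<exists>w\<in>W. \<forall>k\<in>A. w k = f k))"

definition conseq ::
  "('c \<Rightarrow> 'v list \<Rightarrow> 'v) \<Rightarrow> (nat \<Rightarrow> 'v) set \<Rightarrow> ('v set \<Rightarrow> 'v set \<Rightarrow> bool)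
   \<Rightarrow> 'c form set \<Rightarrow> 'c form set \<Rightarrow> bool" where
  "conseq I W R \<Gamma> \<Delta> \<longleftrightarrow> (\<forall>w\<in>W. R (eval I w ` \<Gamma>) (eval I w ` \<Delta>))"

definition constant_expressive ::
  "('c \<Rightarrow> nat) \<Rightarrow> ('c \<Rightarrow> 'v list \<Rightarrow> 'v) \<Rightarrow> (nat \<Rightarrow> 'v) set \<Rightarrow> bool" where
  "constant_expressive ar I W \<longleftrightarrow>
     (\<forall>\<alpha>. \<exists>F. wf ar F \<and> (\<forall>w\<in>W. eval I w F = \<alpha>))"

definition G_conditional ::
  "('c \<Rightarrow> nat) \<Rightarrow> ('c \<Rightarrow> 'v list \<Rightarrow> 'v) \<Rightarrow> (nat \<Rightarrow> 'v) set \<Rightarrow> ('v set \<Rightarrow> 'v set \<Rightarrow> bool)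
   \<Rightarrow> 'c \<Rightarrow> bool" where
  "G_conditional ar I W R imp \<longleftrightarrow> ar imp = 2 \<and>
     (\<forall>\<Gamma> \<Delta> A B. (\<forall>F\<in>\<Gamma> \<union> \<Delta>. wf ar F) \<longrightarrow> wf ar A \<longrightarrow> wf ar B \<longrightarrow>
        (conseq I W R \<Gamma> (insert (Op imp [A, B]) \<Delta>) \<longleftrightarrow> conseq I W R (insert A \<Gamma>) (insert B \<Delta>)) \<and>
        (conseq I W R (insert (Op imp [A, B]) \<Gamma>) \<Delta> \<longleftrightarrow>
           conseq I W R \<Gamma> (insert A \<Delta>) \<and> conseq I W R (insert B \<Gamma>) \<Delta>))"

(* regularity of connective c with rule (Bp, Bc); argument positions are 0-based *)
definition regular ::
  "('c \<Rightarrow> nat) \<Rightarrow> ('c \<Rightarrow> 'v list \<Rightarrow> 'v) \<Rightarrow> (nat \<Rightarrow> 'v) set \<Rightarrow> ('v set \<Rightarrow> 'v set \<Rightarrow> bool)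
   \<Rightarrow> 'c \<Rightarrow> (nat set \<times> nat set) set \<Rightarrow> (nat set \<times> nat set) set \<Rightarrow> bool" where
  "regular ar I W R c Bp Bc \<longleftrightarrow>
     (\<forall>\<Gamma> \<Delta> Fs. (\<forall>F\<in>\<Gamma> \<union> \<Delta>. wf ar F) \<longrightarrow> length Fs = ar c \<longrightarrow> (\<forall>F\<in>set Fs. wf ar F) \<longrightarrow>
        (conseq I W R (insert (Op c Fs) \<Gamma>) \<Delta> \<longleftrightarrow>
           (\<forall>(P, Q)\<in>Bp. conseq I W R (\<Gamma> \<union> (\<lambda>i. Fs ! i) ` P) ((\<lambda>i. Fs ! i) ` Q \<union> \<Delta>))) \<and>
        (conseq I W R \<Gamma> (insert (Op c Fs) \<Delta>) \<longleftrightarrow>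
           (\<forall>(P, Q)\<in>Bc. conseq I W R (\<Gamma> \<union> (\<lambda>i. Fs ! i) ` P) ((\<lambda>i. Fs ! i) ` Q \<union> \<Delta>))))"

definition rule_of_arity :: "nat \<Rightarrow> (nat set \<times> nat set) set \<Rightarrow> bool" where
  "rule_of_arity n B \<longleftrightarrow> (\<forall>(P, Q)\<in>B. P \<subseteq> {..<n} \<and> Q \<subseteq> {..<n})"

(* extension of a language by one new connective None of arity n with truth function g *)
definition ext_ar :: "('c \<Rightarrow> nat) \<Rightarrow> nat \<Rightarrow> 'c option \<Rightarrow> nat" where
  "ext_ar ar n x = (case x of None \<Rightarrow> n | Some c \<Rightarrow> ar c)"

definition ext_I :: "('c \<Rightarrow> 'v list \<Rightarrow> 'v) \<Rightarrow> ('v list \<Rightarrow> 'v) \<Rightarrow> 'c option \<Rightarrow> 'v list \<Rightarrow> 'v" where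
  "ext_I I g x = (case x of None \<Rightarrow> g | Some c \<Rightarrow> I c)"

(* classical truth-relation: V = {False, True} (0 = False, 1 = True), designated {1}, {1} *)
definition classical_rel :: "bool set \<Rightarrow> bool set \<Rightarrow> bool" where
  "classical_rel = mixed {True} {True}"

end

theory Submission
  imports Defs
begin

(* Every classical truth function is the value of a term built from implication and falsum
   (Shannon expansion).  Reading implication as the G-conditional and falsum as a formula of
   constant value 0 turns that term into a truth function C+ on V.  Because 0 is undesignated
   in every component of the intersective relation, that formula obeys the sequent rules of
   falsum, and the G-conditional obeys those of classical implication.  Decomposing the term
   with these rules therefore yields a regularity rule that depends on the term alone, and the
   same decomposition is valid in classical logic. *)

datatype imp_term = TVar nat | TBot | TImp imp_term imp_term

fun eval_term :: "('a \<Rightarrow> 'a \<Rightarrow> 'a) \<Rightarrow> 'a \<Rightarrow> imp_term \<Rightarrow> 'a list \<Rightarrow> 'a" where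
  "eval_term imp falsum (TVar i) xs = xs ! i"
| "eval_term imp falsum TBot xs = falsum"
| "eval_term imp falsum (TImp s u) xs = imp (eval_term imp falsum s xs) (eval_term imp falsum u xs)"

fun term_vars :: "imp_term \<Rightarrow> nat set" where
  "term_vars (TVar i) = {i}"
| "term_vars TBot = {}"
| "term_vars (TImp s u) = term_vars s \<union> term_vars u"

lemma eval_term_closed:
  assumes "\<And>a b. P a \<Longrightarrow> P b \<Longrightarrow> P (imp a b)" and "P falsum"
  shows "term_vars t \<subseteq> {..<length xs} \<Longrightarrow> \<forall>x\<in>set xs. P x \<Longrightarrow> P (eval_term imp falsum t xs)"
  by (induction t) (auto simp: assms)

lemma eval_term_hom:
  assumes "\<And>a b. h (imp a b) = imp' (h a) (h b)" and "h falsum = falsum'"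
  shows "term_vars t \<subseteq> {..<length xs} \<Longrightarrow>
    h (eval_term imp falsum t xs) = eval_term imp' falsum' t (map h xs)"
  by (induction t) (auto simp: assms)

definition neg_term :: "imp_term \<Rightarrow> imp_term" where
  "neg_term a = TImp a TBot"

definition conj_term :: "imp_term \<Rightarrow> imp_term \<Rightarrow> imp_term" where
  "conj_term a b = neg_term (TImp a (neg_term b))"

definition cond_term :: "imp_term \<Rightarrow> imp_term \<Rightarrow> imp_term \<Rightarrow> imp_term" where
  "cond_term c a b = conj_term (TImp c a) (TImp (neg_term c) b)"

fun shannon_term :: "nat \<Rightarrow> (bool list \<Rightarrow> bool) \<Rightarrow> imp_term" where
  "shannon_term 0 f = (if f [] then neg_term TBot else TBot)"
| "shannon_term (Suc k) f =
     cond_term (TVar k) (shannon_term k (\<lambda>ys. f (ys @ [True]))) (shannon_term k (\<lambda>ys. f (ys @ [False])))"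

lemma eval_shannon_term:
  "k \<le> length ys \<Longrightarrow> eval_term (\<longrightarrow>) False (shannon_term k f) ys = f (take k ys)"
proof (induction k arbitrary: f)
  case 0
  then show ?case by (simp add: neg_term_def)
next
  case (Suc k)
  then have "take (Suc k) ys = take k ys @ [ys ! k]"
    by (simp add: take_Suc_conv_app_nth)
  with Suc show ?case
    by (cases "ys ! k") (simp_all add: cond_term_def conj_term_def neg_term_def)
qed

lemma term_vars_shannon_term: "term_vars (shannon_term k f) \<subseteq> {..<k}"
proof (induction k arbitrary: f)
  case (Suc k)
  have "term_vars (shannon_term k g) \<subseteq> {..<Suc k}" for g
    using Suc.IH[of g] by auto
  then show ?case by (auto simp: cond_term_def conj_term_def neg_term_def)
qed (simp add: neg_term_def)

lemma truth_function_imp_falsum_definable: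
  "\<exists>t. term_vars t \<subseteq> {..<n} \<and> (\<forall>ys. length ys = n \<longrightarrow> eval_term (\<longrightarrow>) False t ys = C ys)"
  using eval_shannon_term[of n] term_vars_shannon_term[of n C] by auto

(* The rules read off by decomposing a term with the sequent rules of implication and falsum:
   falsum on the left closes the sequent, on the right it is dropped. *)
fun left_rule :: "imp_term \<Rightarrow> (nat set \<times> nat set) set"
  and right_rule :: "imp_term \<Rightarrow> (nat set \<times> nat set) set" where
  "left_rule (TVar i) = {({i}, {})}"
| "left_rule TBot = {}"
| "left_rule (TImp s u) = right_rule s \<union> left_rule u"
| "right_rule (TVar i) = {({}, {i})}"
| "right_rule TBot = {({}, {})}"
| "right_rule (TImp s u) =
     {(P \<union> P', Q \<union> Q') | P Q P' Q'. (P, Q) \<in> left_rule s \<and> (P', Q') \<in> right_rule u}"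

lemma rules_within_term_vars:
  "((P, Q) \<in> left_rule t \<longrightarrow> P \<union> Q \<subseteq> term_vars t) \<and> ((P, Q) \<in> right_rule t \<longrightarrow> P \<union> Q \<subseteq> term_vars t)"
  by (induction t arbitrary: P Q) fastforce+

lemma rule_of_arity_term_rules:
  assumes "term_vars t \<subseteq> {..<n}"
  shows "rule_of_arity n (left_rule t)" and "rule_of_arity n (right_rule t)"
  using assms rules_within_term_vars[of _ _ t] unfolding rule_of_arity_def by blast+

definition rule_holds ::
  "('p set \<Rightarrow> 'p set \<Rightarrow> bool) \<Rightarrow> 'p list \<Rightarrow> 'p set \<Rightarrow> 'p set \<Rightarrow> (nat set \<times> nat set) set \<Rightarrow> bool" where
  "rule_holds seq Fs \<Gamma> \<Delta> B \<longleftrightarrow> (\<forall>(P, Q)\<in>B. seq (\<Gamma> \<union> (!) Fs ` P) ((!) Fs ` Q \<union> \<Delta>))"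

lemma regular_iff_rule_holds:
  "regular ar I W R c Bp Bc \<longleftrightarrow>
     (\<forall>\<Gamma> \<Delta> Fs. (\<forall>F\<in>\<Gamma> \<union> \<Delta>. wf ar F) \<longrightarrow> length Fs = ar c \<longrightarrow> (\<forall>F\<in>set Fs. wf ar F) \<longrightarrow>
        (conseq I W R (insert (Op c Fs) \<Gamma>) \<Delta> \<longleftrightarrow> rule_holds (conseq I W R) Fs \<Gamma> \<Delta> Bp) \<and>
        (conseq I W R \<Gamma> (insert (Op c Fs) \<Delta>) \<longleftrightarrow> rule_holds (conseq I W R) Fs \<Gamma> \<Delta> Bc))"
  unfolding regular_def rule_holds_def ..

lemma rule_holds_Un:
  "rule_holds seq Fs \<Gamma> \<Delta> (A \<union> B) \<longleftrightarrow> rule_holds seq Fs \<Gamma> \<Delta> A \<and> rule_holds seq Fs \<Gamma> \<Delta> B"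
  unfolding rule_holds_def by blast

lemma rule_holds_join:
  "rule_holds seq Fs \<Gamma> \<Delta> {(P \<union> P', Q \<union> Q') | P Q P' Q'. (P, Q) \<in> A \<and> (P', Q') \<in> B} \<longleftrightarrow>
     (\<forall>(P, Q)\<in>A. rule_holds seq Fs (\<Gamma> \<union> (!) Fs ` P) ((!) Fs ` Q \<union> \<Delta>) B)"
  unfolding rule_holds_def
proof (intro iffI ballI; clarify)
  fix P Q P' Q'
  assume "\<forall>(P, Q)\<in>{(P \<union> P', Q \<union> Q') | P Q P' Q'. (P, Q) \<in> A \<and> (P', Q') \<in> B}.
      seq (\<Gamma> \<union> (!) Fs ` P) ((!) Fs ` Q \<union> \<Delta>)"
    and "(P, Q) \<in> A" "(P', Q') \<in> B"
  then have "seq (\<Gamma> \<union> (!) Fs ` (P \<union> P')) ((!) Fs ` (Q \<union> Q') \<union> \<Delta>)"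
    by blast
  then show "seq (\<Gamma> \<union> (!) Fs ` P \<union> (!) Fs ` P') ((!) Fs ` Q' \<union> ((!) Fs ` Q \<union> \<Delta>))"
    by (simp add: image_Un Un_ac)
qed (auto simp: image_Un Un_ac)

locale imp_falsum_calculus =
  fixes wff :: "'p \<Rightarrow> bool"
    and seq :: "'p set \<Rightarrow> 'p set \<Rightarrow> bool"
    and imp :: "'p \<Rightarrow> 'p \<Rightarrow> 'p"
    and falsum :: 'p
  assumes wff_imp: "wff A \<Longrightarrow> wff B \<Longrightarrow> wff (imp A B)"
    and wff_falsum: "wff falsum"
    and imp_right: "\<forall>F\<in>\<Gamma> \<union> \<Delta>. wff F \<Longrightarrow> wff A \<Longrightarrow> wff B \<Longrightarrow>
      seq \<Gamma> (insert (imp A B) \<Delta>) \<longleftrightarrow> seq (insert A \<Gamma>) (insert B \<Delta>)"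
    and imp_left: "\<forall>F\<in>\<Gamma> \<union> \<Delta>. wff F \<Longrightarrow> wff A \<Longrightarrow> wff B \<Longrightarrow>
      seq (insert (imp A B) \<Gamma>) \<Delta> \<longleftrightarrow> seq \<Gamma> (insert A \<Delta>) \<and> seq (insert B \<Gamma>) \<Delta>"
    and falsum_left: "\<forall>F\<in>\<Gamma> \<union> \<Delta>. wff F \<Longrightarrow> seq (insert falsum \<Gamma>) \<Delta>"
    and falsum_right: "\<forall>F\<in>\<Gamma> \<union> \<Delta>. wff F \<Longrightarrow> seq \<Gamma> (insert falsum \<Delta>) \<longleftrightarrow> seq \<Gamma> \<Delta>"
begin

lemma wff_eval_term:
  "term_vars t \<subseteq> {..<length Fs} \<Longrightarrow> \<forall>F\<in>set Fs. wff F \<Longrightarrow> wff (eval_term imp falsum t Fs)"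
  by (rule eval_term_closed[where P = wff]) (use wff_imp wff_falsum in auto)

lemma rule_holds_eval_term:
  "term_vars t \<subseteq> {..<length Fs} \<Longrightarrow> \<forall>F\<in>set Fs. wff F \<Longrightarrow> \<forall>F\<in>\<Gamma> \<union> \<Delta>. wff F \<Longrightarrow>
    (seq (insert (eval_term imp falsum t Fs) \<Gamma>) \<Delta> \<longleftrightarrow> rule_holds seq Fs \<Gamma> \<Delta> (left_rule t)) \<and>
    (seq \<Gamma> (insert (eval_term imp falsum t Fs) \<Delta>) \<longleftrightarrow> rule_holds seq Fs \<Gamma> \<Delta> (right_rule t))"
proof (induction t arbitrary: \<Gamma> \<Delta>)
  case (TImp s u)
  let ?s = "eval_term imp falsum s Fs" and ?u = "eval_term imp falsum u Fs"
  have vars: "term_vars s \<subseteq> {..<length Fs}" "term_vars u \<subseteq> {..<length Fs}"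
    using TImp.prems by auto
  have wff_su: "wff ?s" "wff ?u"
    using wff_eval_term vars TImp.prems by blast+
  have wff_rule: "\<forall>F\<in>(\<Gamma> \<union> (!) Fs ` P) \<union> ((!) Fs ` Q \<union> \<Delta>). wff F" if "(P, Q) \<in> left_rule s" for P Q
    using rules_within_term_vars[of P Q s] that vars TImp.prems by auto
  have "seq \<Gamma> (insert (imp ?s ?u) \<Delta>) \<longleftrightarrow> seq (insert ?s \<Gamma>) (insert ?u \<Delta>)"
    using imp_right[OF _ wff_su] TImp.prems by simp
  also have "\<dots> \<longleftrightarrow> rule_holds seq Fs \<Gamma> (insert ?u \<Delta>) (left_rule s)"
    using TImp.IH(1)[OF vars(1)] TImp.prems wff_su by simp
  also have "\<dots> \<longleftrightarrow> (\<forall>(P, Q)\<in>left_rule s. seq (\<Gamma> \<union> (!) Fs ` P) (insert ?u ((!) Fs ` Q \<union> \<Delta>)))"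
    unfolding rule_holds_def by simp
  also have "\<dots> \<longleftrightarrow>
      (\<forall>(P, Q)\<in>left_rule s. rule_holds seq Fs (\<Gamma> \<union> (!) Fs ` P) ((!) Fs ` Q \<union> \<Delta>) (right_rule u))"
    using TImp.IH(2)[OF vars(2)] TImp.prems wff_rule by (intro ball_cong) auto
  finally have right: "seq \<Gamma> (insert (imp ?s ?u) \<Delta>) \<longleftrightarrow> rule_holds seq Fs \<Gamma> \<Delta> (right_rule (TImp s u))"
    by (simp add: rule_holds_join)
  have left: "seq (insert (imp ?s ?u) \<Gamma>) \<Delta> \<longleftrightarrow> rule_holds seq Fs \<Gamma> \<Delta> (left_rule (TImp s u))"
    using imp_left[OF _ wff_su] TImp.IH(1)[OF vars(1)] TImp.IH(2)[OF vars(2)] TImp.prems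
    by (simp add: rule_holds_Un)
  from left right show ?case by simp
qed (auto simp: rule_holds_def falsum_left falsum_right)

lemma regular_if_translation:
  fixes tr :: "'c form \<Rightarrow> 'p"
  assumes conseq_tr: "\<And>\<Gamma> \<Delta>. \<forall>F\<in>\<Gamma> \<union> \<Delta>. wf ar F \<Longrightarrow> conseq I W R \<Gamma> \<Delta> \<longleftrightarrow> seq (tr ` \<Gamma>) (tr ` \<Delta>)"
    and wff_tr: "\<And>F. wf ar F \<Longrightarrow> wff (tr F)"
    and tr_Op: "\<And>Fs. length Fs = ar c \<Longrightarrow> \<forall>F\<in>set Fs. wf ar F \<Longrightarrow>
      tr (Op c Fs) = eval_term imp falsum t (map tr Fs)"
    and vars: "term_vars t \<subseteq> {..<ar c}"
  shows "regular ar I W R c (left_rule t) (right_rule t)"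
  unfolding regular_iff_rule_holds
proof (intro allI impI)
  fix \<Gamma> \<Delta> Fs
  assume wf_ctx: "\<forall>F\<in>\<Gamma> \<union> \<Delta>. wf ar F" and len: "length Fs = ar c" and wf_Fs: "\<forall>F\<in>set Fs. wf ar F"
  have rule_tr: "rule_holds (conseq I W R) Fs \<Gamma> \<Delta> B \<longleftrightarrow> rule_holds seq (map tr Fs) (tr ` \<Gamma>) (tr ` \<Delta>) B"
    if "rule_of_arity (ar c) B" for B
  proof -
    have "tr ` (!) Fs ` P = (!) (map tr Fs) ` P" if "P \<subseteq> {..<length Fs}" for P
      using that by (force simp: image_image)
    moreover have "conseq I W R (\<Gamma> \<union> (!) Fs ` P) ((!) Fs ` Q \<union> \<Delta>) \<longleftrightarrow>
        seq (tr ` \<Gamma> \<union> tr ` (!) Fs ` P) (tr ` (!) Fs ` Q \<union> tr ` \<Delta>)"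
      if "P \<subseteq> {..<length Fs}" "Q \<subseteq> {..<length Fs}" for P Q
    proof -
      have "\<forall>F\<in>(\<Gamma> \<union> (!) Fs ` P) \<union> ((!) Fs ` Q \<union> \<Delta>). wf ar F"
        using that wf_ctx wf_Fs by (auto simp: subset_iff)
      then show ?thesis
        using conseq_tr by (simp add: image_Un)
    qed
    ultimately show ?thesis
      using that len unfolding rule_holds_def rule_of_arity_def by (intro ball_cong) auto
  qed
  have wf_Op: "wf ar (Op c Fs)"
    using len wf_Fs by simp
  show "(conseq I W R (insert (Op c Fs) \<Gamma>) \<Delta> \<longleftrightarrow> rule_holds (conseq I W R) Fs \<Gamma> \<Delta> (left_rule t)) \<and>
      (conseq I W R \<Gamma> (insert (Op c Fs) \<Delta>) \<longleftrightarrow> rule_holds (conseq I W R) Fs \<Gamma> \<Delta> (right_rule t))"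
    using rule_holds_eval_term[of t "map tr Fs" "tr ` \<Gamma>" "tr ` \<Delta>"]
      conseq_tr[of "insert (Op c Fs) \<Gamma>" \<Delta>] conseq_tr[of \<Gamma> "insert (Op c Fs) \<Delta>"]
      rule_tr rule_of_arity_term_rules[OF vars] tr_Op[OF len wf_Fs] wf_Op wf_ctx wf_Fs wff_tr vars len
    by auto
qed

end

definition sem_entails :: "('w \<Rightarrow> bool) set \<Rightarrow> ('w \<Rightarrow> bool) set \<Rightarrow> bool" where
  "sem_entails \<Gamma> \<Delta> \<longleftrightarrow> (\<forall>w. (\<forall>\<phi>\<in>\<Gamma>. \<phi> w) \<longrightarrow> (\<exists>\<psi>\<in>\<Delta>. \<psi> w))"

lemma imp_falsum_calculus_sem_entails:
  "imp_falsum_calculus (\<lambda>_. True) sem_entails (\<lambda>a b w. a w \<longrightarrow> b w) (\<lambda>_. False)"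
  by unfold_locales (auto simp: sem_entails_def)

lemma regular_classical:
  assumes vars: "term_vars t \<subseteq> {..<n}"
    and t_C: "\<And>ys. length ys = n \<Longrightarrow> eval_term (\<longrightarrow>) False t ys = C ys"
  shows "regular (\<lambda>_::unit. n) (\<lambda>_. C) UNIV classical_rel () (left_rule t) (right_rule t)"
proof (rule imp_falsum_calculus.regular_if_translation[OF imp_falsum_calculus_sem_entails,
      where tr = "\<lambda>F w. eval (\<lambda>_. C) w F"])
  show "conseq (\<lambda>_. C) UNIV classical_rel \<Gamma> \<Delta> \<longleftrightarrow>
      sem_entails ((\<lambda>F w. eval (\<lambda>_. C) w F) ` \<Gamma>) ((\<lambda>F w. eval (\<lambda>_. C) w F) ` \<Delta>)" for \<Gamma> \<Delta>
    unfolding conseq_def classical_rel_def mixed_def sem_entails_def by auto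
  show "(\<lambda>w. eval (\<lambda>_. C) w (Op () Fs)) =
      eval_term (\<lambda>a b w. a w \<longrightarrow> b w) (\<lambda>_. False) t (map (\<lambda>F w. eval (\<lambda>_. C) w F) Fs)"
    if "length Fs = n" for Fs
  proof
    fix w
    have "eval_term (\<lambda>a b w. a w \<longrightarrow> b w) (\<lambda>_. False) t (map (\<lambda>F w. eval (\<lambda>_. C) w F) Fs) w =
        eval_term (\<longrightarrow>) False t (map (eval (\<lambda>_. C) w) Fs)"
      using eval_term_hom[where h = "\<lambda>\<phi>. \<phi> w" and imp' = "(\<longrightarrow>)" and falsum' = False] vars that
      by (simp add: comp_def)
    then show "eval (\<lambda>_. C) w (Op () Fs) =
        eval_term (\<lambda>a b w. a w \<longrightarrow> b w) (\<lambda>_. False) t (map (\<lambda>F w. eval (\<lambda>_. C) w F) Fs) w"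
      using t_C that by simp
  qed
qed (use vars in simp_all)

lemma imp_falsum_calculus_conseq:
  assumes G: "G_conditional ar I W R imp" and R: "intersective one zero R"
    and z: "wf ar z" "\<forall>w\<in>W. eval I w z = zero"
  shows "imp_falsum_calculus (wf ar) (conseq I W R) (\<lambda>A B. Op imp [A, B]) z"
proof -
  obtain S where S: "\<forall>(Dp, Dc)\<in>S. designated one zero Dp \<and> designated one zero Dc"
    and R_S: "R = (\<lambda>\<gamma> \<delta>. \<forall>(Dp, Dc)\<in>S. mixed Dp Dc \<gamma> \<delta>)"
    using R unfolding intersective_def by auto
  have R_zero_left: "R (insert zero \<gamma>) \<delta>" and R_zero_right: "R \<gamma> (insert zero \<delta>) \<longleftrightarrow> R \<gamma> \<delta>"
    for \<gamma> \<delta>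
    using S unfolding R_S mixed_def designated_def by auto
  show ?thesis
  proof
    show "conseq I W R (insert z \<Gamma>) \<Delta>" for \<Gamma> \<Delta>
      using R_zero_left z(2) unfolding conseq_def by simp
    show "conseq I W R \<Gamma> (insert z \<Delta>) \<longleftrightarrow> conseq I W R \<Gamma> \<Delta>" for \<Gamma> \<Delta>
      using R_zero_right z(2) unfolding conseq_def by simp
  qed (use G z(1) in \<open>simp_all add: G_conditional_def\<close>)
qed

lemma ext_ar_simps [simp]: "ext_ar ar n None = n" "ext_ar ar n (Some c) = ar c"
  by (simp_all add: ext_ar_def)

lemma ext_I_simps [simp]: "ext_I I g None = g" "ext_I I g (Some c) = I c"
  by (simp_all add: ext_I_def)

fun expand :: "('c form list \<Rightarrow> 'c form) \<Rightarrow> 'c option form \<Rightarrow> 'c form" where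
  "expand e (Atom k) = Atom k"
| "expand e (Op None Fs) = e (map (expand e) Fs)"
| "expand e (Op (Some c) Fs) = Op c (map (expand e) Fs)"

lemma wf_expand:
  assumes "\<And>Fs. length Fs = n \<Longrightarrow> \<forall>F\<in>set Fs. wf ar F \<Longrightarrow> wf ar (e Fs)"
  shows "wf (ext_ar ar n) X \<Longrightarrow> wf ar (expand e X)"
proof (induction X)
  case (Op c Fs)
  then show ?case by (cases c) (auto simp: assms)
qed simp

lemma eval_expand:
  assumes wf_e: "\<And>Fs. length Fs = n \<Longrightarrow> \<forall>F\<in>set Fs. wf ar F \<Longrightarrow> wf ar (e Fs)"
    and eval_e: "\<And>Fs. length Fs = n \<Longrightarrow> \<forall>F\<in>set Fs. wf ar F \<Longrightarrow> eval I w (e Fs) = g (map (eval I w) Fs)"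
  shows "wf (ext_ar ar n) X \<Longrightarrow> eval I w (expand e X) = eval (ext_I I g) w X"
proof (induction X)
  case (Op c Fs)
  then have IH: "map (eval I w \<circ> expand e) Fs = map (eval (ext_I I g) w) Fs"
    by (cases c) auto
  show ?case
  proof (cases c)
    case None
    with Op.prems have "length Fs = n" and "\<forall>F\<in>set Fs. wf ar (expand e F)"
      using wf_expand[of n ar e, OF wf_e] by auto
    with None show ?thesis
      using eval_e[of "map (expand e) Fs"] by (simp add: IH)
  qed (simp add: IH)
qed simp

lemma conseq_expand:
  assumes wf_e: "\<And>Fs. length Fs = n \<Longrightarrow> \<forall>F\<in>set Fs. wf ar F \<Longrightarrow> wf ar (e Fs)"
    and eval_e: "\<And>Fs w. w \<in> W \<Longrightarrow> length Fs = n \<Longrightarrow> \<forall>F\<in>set Fs. wf ar F \<Longrightarrow>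
      eval I w (e Fs) = g (map (eval I w) Fs)"
    and wf_ctx: "\<forall>F\<in>\<Gamma> \<union> \<Delta>. wf (ext_ar ar n) F"
  shows "conseq (ext_I I g) W R \<Gamma> \<Delta> \<longleftrightarrow> conseq I W R (expand e ` \<Gamma>) (expand e ` \<Delta>)"
proof -
  have "eval I w ` expand e ` X = eval (ext_I I g) w ` X"
    if "w \<in> W" and "\<forall>F\<in>X. wf (ext_ar ar n) F" for w X
  proof -
    have "eval I w (expand e F) = eval (ext_I I g) w F" if "F \<in> X" for F
      using eval_expand[of n ar e I w g, OF wf_e eval_e[OF \<open>w \<in> W\<close>]] \<open>F \<in> X\<close> \<open>\<forall>F\<in>X. _\<close>
      by blast
    then show ?thesis
      unfolding image_image by (rule image_cong[OF refl])
  qed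
  with wf_ctx show ?thesis
    unfolding conseq_def by simp
qed

lemma regular_defined_connective:
  assumes G: "G_conditional ar I W R imp" and R: "intersective one zero R"
    and z: "wf ar z" "\<forall>w\<in>W. eval I w z = zero"
    and vars: "term_vars t \<subseteq> {..<n}"
  shows "regular (ext_ar ar n) (ext_I I (eval_term (\<lambda>x y. I imp [x, y]) zero t)) W R None
    (left_rule t) (right_rule t)"
proof -
  interpret imp_falsum_calculus "wf ar" "conseq I W R" "\<lambda>A B. Op imp [A, B]" z
    using G R z by (rule imp_falsum_calculus_conseq)
  let ?e = "eval_term (\<lambda>A B. Op imp [A, B]) z t"
  have wf_e: "wf ar (?e Fs)" if "length Fs = n" "\<forall>F\<in>set Fs. wf ar F" for Fs
    using wff_eval_term vars that by simp
  have eval_e: "eval I w (?e Fs) = eval_term (\<lambda>x y. I imp [x, y]) zero t (map (eval I w) Fs)"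
    if "w \<in> W" "length Fs = n" for w Fs
    using eval_term_hom[where h = "eval I w"] vars z(2) that by simp
  show ?thesis
  proof (rule regular_if_translation[where tr = "expand ?e"])
    show "conseq (ext_I I (eval_term (\<lambda>x y. I imp [x, y]) zero t)) W R \<Gamma> \<Delta> \<longleftrightarrow>
        conseq I W R (expand ?e ` \<Gamma>) (expand ?e ` \<Delta>)"
      if "\<forall>F\<in>\<Gamma> \<union> \<Delta>. wf (ext_ar ar n) F" for \<Gamma> \<Delta>
      using conseq_expand[OF wf_e eval_e that] by simp
    show "wf (ext_ar ar n) F \<Longrightarrow> wf ar (expand ?e F)" for F
      using wf_expand[OF wf_e] by simp
  qed (use vars in simp_all)
qed

theorem theorem3p19:
  fixes one zero :: "'v::finite"
    and ar :: "'c \<Rightarrow> nat"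
    and I :: "'c \<Rightarrow> 'v list \<Rightarrow> 'v"
    and W :: "(nat \<Rightarrow> 'v) set"
    and R :: "'v set \<Rightarrow> 'v set \<Rightarrow> bool"
    and n :: nat
    and C :: "bool list \<Rightarrow> bool"
  assumes "one \<noteq> zero"
    and "countable (UNIV :: 'c set)" and "infinite (UNIV :: 'c set)"
    and "semantics W"
    and "intersective one zero R"
    and "constant_expressive ar I W"
    and "\<exists>imp. G_conditional ar I W R imp"
  shows "\<exists>(g :: 'v list \<Rightarrow> 'v) Bp Bc.
           rule_of_arity n Bp \<and> rule_of_arity n Bc \<and>
           regular (ext_ar ar n) (ext_I I g) W R None Bp Bc \<and>
           regular (\<lambda>_::unit. n) (\<lambda>_. C) UNIV classical_rel () Bp Bc"
proof -
  \<comment> \<open>The construction is explicit.\<close>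
  obtain imp where G: "G_conditional ar I W R imp"
    using assms(7) by blast
  obtain z where z: "wf ar z" "\<forall>w\<in>W. eval I w z = zero"
    using assms(6) unfolding constant_expressive_def by blast
  obtain t where vars: "term_vars t \<subseteq> {..<n}"
    and t_C: "\<forall>ys. length ys = n \<longrightarrow> eval_term (\<longrightarrow>) False t ys = C ys"
    using truth_function_imp_falsum_definable by blast
  show ?thesis
    using rule_of_arity_term_rules[OF vars] regular_defined_connective[OF G assms(5) z vars]
      regular_classical[OF vars] t_C by (intro exI conjI) auto
qed

end
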